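(* Let $m,n\ge1$ be integers and let $L=J(2m+1,2n+1)$ be oriented so that $\alpha(a)=\alpha(b)=t$. For $1\le j<m/2$ and $1\le k\le n-1$ let $$Y_{j,k}=\Big\{(x,y,z)\in\mathbb{C}^3 \ \Big|\ z=2\cos\tfrac{2j\pi}{m},\ xy-z=2\cos\tfrac{k\pi}{n}\Big\},$$ let $v_1=xy+2+(m^2+m)(x+y)^2$ and $Y=\{(x,y,z)\in\mathbb{C}^3\mid z=-2,\ mS_n(v_1)+(m+1)S_{n-1}(v_1)=0\}$. (1) If $m$ is odd, then $\deg\Delta_{L,\chi}(t)=4n=4g(L)$ for every $\chi\in\{R(x,y,z)=0\}\setminus\bigcup_{1\le j<m/2,\,1\le k\le n-1}Y_{j,k}$. (2) If $m$ is even, then $\deg\Delta_{L,\chi}(t)=4n=4g(L)$ for every $\chi\in\{R(x,y,z)=0\}\setminus Y\setminus\bigcup_{1\le j<m/2,\,1\le k\le n-1}Y_{j,k}$.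
   Context: Chebyshev polynomials: $S_k(q)$ is defined for all integers $k$ by $S_0=1$, $S_1=q$, $S_{k+1}=qS_k-S_{k-1}$. For integers $m,n\ge1$, $L=J(2m+1,2n+1)$ is the double twist link, the two-component $2$-bridge link corresponding to $\frac{2n+1}{4mn+2(m+n)}$, with a twist region of $2m+1$ crossings and one of $2n+1$ crossings. Its group has the presentation $G(L)=\langle a,b\mid awa^{-1}=w\rangle$ with $w=(b^{-1}a)^m\big((ba^{-1})^mba(b^{-1}a)^m\big)^n$, where $a,b$ are meridians of the two components; the orientation considered is the one in which $a$ and $b$ are both positively oriented meridians, so $\alpha:G(L)\to\langle t\rangle$ sends $a\mapsto t$, $b\mapsto t$ (for this orientation $g(L)=n$, and $L$ is fibered iff $m=1$). For $\rho:G(L)\to SL(2,\mathbb{C})$, let $\Phi$ be the ring homomorphism from the group ring of the free group on $a,b$ to $M(2,\mathbb{C}[t^{\pm1}])$ induced by $g\mapsto\alpha(g)\rho(g)$; the twisted Alexander polynomial is $\Delta_{L,\rho}(t)=\det\Phi(\partial r/\partial b)/\det\Phi(1-a)$ with $r=awa^{-1}w^{-1}$ and $\partial$ the Fox derivative; it is a Laurent polynomial defined up to multiplication by $t^{2k}$ and depends only on the character of $\rho$, so one writes $\Delta_{L,\chi}$ for a character $\chi$. Its degree is the highest minus the lowest exponent of $t$ with nonzero coefficient. Characters are given coordinates $(x,y,z)=(\operatorname{tr}\rho(a),\operatorname{tr}\rho(b),\operatorname{tr}\rho(ab^{-1}))$; the characters of non-abelian representations form exactly the zero set in $\mathbb{C}^3$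 of $R(x,y,z)=S_{m-1}(z)S_n(v)-S_m(z)S_{n-1}(v)$, where $v=\big(xS_m(z)-yS_{m-1}(z)\big)\big(yS_m(z)-xS_{m-1}(z)\big)-z\big(S_m^2(z)+S_{m-1}^2(z)\big)+4S_m(z)S_{m-1}(z)$. $g(L)$ denotes the genus of the oriented link. *)

theory Defs
  imports "HOL-Analysis.Analysis" "HOL-Computational_Algebra.Formal_Laurent_Series"
begin

fun cheb :: "nat \<Rightarrow> complex \<Rightarrow> complex" where
  "cheb 0 q = 1"
| "cheb (Suc 0) q = q"
| "cheb (Suc (Suc k)) q = q * cheb (Suc k) q - cheb k q"

datatype gen = GA | GB

type_synonym letter = "gen \<times> bool"   (* (generator, True = inverse letter) *)
type_synonym word = "letter list"

definition winv :: "word \<Rightarrow> word" where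
  "winv w = rev (map (\<lambda>(g, e). (g, \<not> e)) w)"

definition wpow :: "word \<Rightarrow> nat \<Rightarrow> word" where
  "wpow w k = concat (replicate k w)"

(* w = (b^-1 a)^m ((b a^-1)^m b a (b^-1 a)^m)^n *)
definition Jw :: "nat \<Rightarrow> nat \<Rightarrow> word" where
  "Jw m n = wpow [(GB, True), (GA, False)] m @
     wpow (wpow [(GB, False), (GA, True)] m @ [(GB, False), (GA, False)]
           @ wpow [(GB, True), (GA, False)] m) n"

definition Jr :: "nat \<Rightarrow> nat \<Rightarrow> word" where
  "Jr m n = [(GA, False)] @ Jw m n @ [(GA, True)] @ winv (Jw m n)"

type_synonym cmat = "complex^2^2"

(* inverse of a matrix of determinant 1 (adjugate) *)
definition sl2_inv :: "'a::comm_ring_1^2^2 \<Rightarrow> 'a^2^2" where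
  "sl2_inv M = (\<chi> i j. if i = j then M$(if i = 1 then 2 else 1)$(if i = 1 then 2 else 1)
                         else - M$i$j)"

definition rho_letter :: "cmat \<Rightarrow> cmat \<Rightarrow> letter \<Rightarrow> cmat" where
  "rho_letter A B l = (let M = (if fst l = GA then A else B) in
                       if snd l then sl2_inv M else M)"

definition rho_word :: "cmat \<Rightarrow> cmat \<Rightarrow> word \<Rightarrow> cmat" where
  "rho_word A B w = foldr (\<lambda>l M. rho_letter A B l ** M) w (mat 1)"

section \<open>The map Phi: g \<mapsto> alpha(g) rho(g), into 2x2 matrices over Laurent series in t\<close>

type_synonym lmat = "complex fls^2^2"

definition lift_mat :: "cmat \<Rightarrow> lmat" where
  "lift_mat M = (\<chi> i j. fls_const (M$i$j))"

definition Phi_letter :: "cmat \<Rightarrow> cmat \<Rightarrow> letter \<Rightarrow> lmat" where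
  "Phi_letter A B l = (\<chi> i j. (if snd l then fls_X_inv else fls_X) * lift_mat (rho_letter A B l) $ i $ j)"

definition Phi_word :: "cmat \<Rightarrow> cmat \<Rightarrow> word \<Rightarrow> lmat" where
  "Phi_word A B w = foldr (\<lambda>l M. Phi_letter A B l ** M) w (mat 1)"

(* Phi applied to the Fox derivative d/db of a letter *)
definition fox_b_letter :: "cmat \<Rightarrow> cmat \<Rightarrow> letter \<Rightarrow> lmat" where
  "fox_b_letter A B l = (if fst l = GA then 0
                         else if snd l then - Phi_letter A B l else mat 1)"

(* Phi(d w / d b), via d(g u)/db = dg/db + g du/db *)
fun Phi_fox_b :: "cmat \<Rightarrow> cmat \<Rightarrow> word \<Rightarrow> lmat" where
  "Phi_fox_b A B [] = 0"
| "Phi_fox_b A B (l # w) = fox_b_letter A B l + Phi_letter A B l ** Phi_fox_b A B w"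

definition twisted_alex :: "nat \<Rightarrow> nat \<Rightarrow> cmat \<Rightarrow> cmat \<Rightarrow> complex fls" where
  "twisted_alex m n A B =
     det (Phi_fox_b A B (Jr m n)) / det (mat 1 - Phi_letter A B (GA, False))"

definition is_laurent_poly :: "complex fls \<Rightarrow> bool" where
  "is_laurent_poly f \<longleftrightarrow> finite {k. fls_nth f k \<noteq> 0}"

definition laurent_deg :: "complex fls \<Rightarrow> int" where
  "laurent_deg f = (GREATEST k. fls_nth f k \<noteq> 0) - fls_subdegree f"

definition Rpoly :: "nat \<Rightarrow> nat \<Rightarrow> complex \<Rightarrow> complex \<Rightarrow> complex \<Rightarrow> complex" where
  "Rpoly m n x y z =
    (let v = (x * cheb m z - y * cheb (m-1) z) * (y * cheb m z - x * cheb (m-1) z)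
             - z * ((cheb m z)^2 + (cheb (m-1) z)^2) + 4 * cheb m z * cheb (m-1) z
     in cheb (m-1) z * cheb n v - cheb m z * cheb (n-1) v)"

definition Yjk :: "nat \<Rightarrow> nat \<Rightarrow> nat \<Rightarrow> nat \<Rightarrow> (complex \<times> complex \<times> complex) set" where
  "Yjk m n j k = {(x, y, z). z = complex_of_real (2 * cos (2 * real j * pi / real m)) \<and>
                             x * y - z = complex_of_real (2 * cos (real k * pi / real n))}"

definition Yexc :: "nat \<Rightarrow> nat \<Rightarrow> (complex \<times> complex \<times> complex) set" where
  "Yexc m n = {(x, y, z). z = -2 \<and>
     (let v1 = x * y + 2 + (of_nat (m^2 + m)) * (x + y)^2
      in of_nat m * cheb n v1 + of_nat (m + 1) * cheb (n-1) v1 = 0)}"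

end

theory Submission
  imports Defs
begin

text \<open>Let \<open>p = b\<inverse>a\<close>, \<open>X = \<rho>(p)\<close> and \<open>G = 1 + X + \<dots> + X\<^sup>m\<^sup>-\<^sup>1\<close>. Since \<open>\<Phi>\<close> sends a word of
  exponent sum \<open>e\<close> to \<open>t\<^sup>e \<rho>(w)\<close> and \<open>\<Phi>(r) = 1\<close>, Fox calculus gives \<open>\<Delta> = det \<Phi>(\<partial>w/\<partial>b)\<close>.
  In \<open>w = p\<^sup>m (q\<^sup>m b a p\<^sup>m)\<^sup>n\<close> (with \<open>q = b a\<inverse>\<close>) the prefix \<open>p\<^sup>m\<close> yields the lowest term
  \<open>t\<inverse> G (-\<rho>(b)\<inverse>)\<close> and the last block the highest term \<open>t\<^sup>2\<^sup>n\<^sup>-\<^sup>1 U G (-\<rho>(b)\<inverse>)\<close> with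
  \<open>det U = 1\<close>, so \<open>\<Delta>\<close> has degree \<open>4n\<close> as soon as \<open>det G \<noteq> 0\<close>.
  As \<open>(X - 1) G = X\<^sup>m - 1\<close> and \<open>tr X = z\<close>, \<open>det G = 0\<close> forces \<open>z = \<lambda> + \<lambda>\<inverse>\<close> with \<open>\<lambda>\<^sup>m = 1\<close>,
  \<open>\<lambda> \<noteq> 1\<close> (for \<open>z = 2\<close> one has \<open>det G = m\<^sup>2\<close>). If \<open>\<lambda> = -1\<close>, then \<open>m\<close> is even and \<open>R = 0\<close> at
  \<open>z = -2\<close> is the equation of \<open>Y\<close>; otherwise \<open>S\<^sub>m\<^sub>-\<^sub>1(z) = 0\<close> and \<open>S\<^sub>m(z) = 1\<close>, so \<open>R = 0\<close> reduces
  to \<open>S\<^sub>n\<^sub>-\<^sub>1(xy - z) = 0\<close>, which puts the character on some \<open>Y\<^sub>j\<^sub>,\<^sub>k\<close>.\<close>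

notation fls_nth (infixl "$$" 75)

section \<open>Laurent series with bounded support\<close>

definition fls_support_within :: "'a::zero fls \<Rightarrow> int \<Rightarrow> int \<Rightarrow> bool" where
  "fls_support_within f l h \<longleftrightarrow> (\<forall>k. k < l \<or> h < k \<longrightarrow> f $$ k = 0)"

lemma fls_support_within_add:
    "fls_support_within f l h \<Longrightarrow> fls_support_within g l h \<Longrightarrow> fls_support_within (f + g) l h"
  and fls_support_within_diff:
    "fls_support_within f l h \<Longrightarrow> fls_support_within g l h \<Longrightarrow> fls_support_within (f - g) l h"
  by (auto simp: fls_support_within_def)

lemma fls_times_nth_support_within:
  fixes f g :: "'a::comm_ring_1 fls"
  assumes "fls_support_within f l h"
  shows "(f * g) $$ n = (\<Sum>i=l..h. f $$ i * g $$ (n - i))"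
proof (cases "f = 0 \<or> g = 0")
  case False
  define S where "S = {min l (fls_subdegree f) .. max h (n - fls_subdegree g)}"
  have "(f * g) $$ n = (\<Sum>i = fls_subdegree f..n - fls_subdegree g. f $$ i * g $$ (n - i))"
    by (rule fls_times_nth(2))
  also have "\<dots> = (\<Sum>i\<in>S. f $$ i * g $$ (n - i))"
    by (rule sum.mono_neutral_left) (auto simp: S_def)
  also have "\<dots> = (\<Sum>i=l..h. f $$ i * g $$ (n - i))"
    using assms by (intro sum.mono_neutral_right) (auto simp: S_def fls_support_within_def)
  finally show ?thesis .
qed auto

lemma fls_support_within_mult:
  fixes f g :: "'a::comm_ring_1 fls"
  assumes f: "fls_support_within f l1 h1" and g: "fls_support_within g l2 h2"
  shows "fls_support_within (f * g) (l1 + l2) (h1 + h2)"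
    and "(f * g) $$ (l1 + l2) = f $$ l1 * g $$ l2"
    and "(f * g) $$ (h1 + h2) = f $$ h1 * g $$ h2"
proof -
  note prod = fls_times_nth_support_within[OF f]
  show "fls_support_within (f * g) (l1 + l2) (h1 + h2)"
    unfolding fls_support_within_def prod
    using g by (auto simp: fls_support_within_def intro!: sum.neutral)
  show "(f * g) $$ (l1 + l2) = f $$ l1 * g $$ l2"
  proof (cases "l1 \<le> h1")
    case True
    have "(\<Sum>i=l1..h1. f $$ i * g $$ (l1 + l2 - i)) = (\<Sum>i\<in>{l1}. f $$ i * g $$ (l1 + l2 - i))"
      using True g by (intro sum.mono_neutral_right) (auto simp: fls_support_within_def)
    then show ?thesis by (simp add: prod)
  qed (use f in \<open>simp add: prod fls_support_within_def\<close>)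
  show "(f * g) $$ (h1 + h2) = f $$ h1 * g $$ h2"
  proof (cases "l1 \<le> h1")
    case True
    have "(\<Sum>i=l1..h1. f $$ i * g $$ (h1 + h2 - i)) = (\<Sum>i\<in>{h1}. f $$ i * g $$ (h1 + h2 - i))"
      using True g by (intro sum.mono_neutral_right) (auto simp: fls_support_within_def)
    then show ?thesis by (simp add: prod)
  qed (use f in \<open>simp add: prod fls_support_within_def\<close>)
qed

lemma laurent_deg_support_within:
  assumes "fls_support_within f l h" "f $$ l \<noteq> 0" "f $$ h \<noteq> 0"
  shows "f \<noteq> 0" "is_laurent_poly f" "laurent_deg f = h - l"
proof -
  show "f \<noteq> 0" using assms(2) fls_nonzeroI by blast
  have supp: "{k. f $$ k \<noteq> 0} \<subseteq> {l..h}"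
    using assms(1) by (force simp: fls_support_within_def)
  then show "is_laurent_poly f" unfolding is_laurent_poly_def by (rule finite_subset) simp
  have "(GREATEST k. f $$ k \<noteq> 0) = h"
    by (rule Greatest_equality) (use assms supp in auto)
  moreover have "fls_subdegree f = l"
    by (rule fls_subdegree_eqI) (use assms in \<open>auto simp: fls_support_within_def\<close>)
  ultimately show "laurent_deg f = h - l" by (simp add: laurent_deg_def)
qed

section \<open>2 \<times> 2 matrices\<close>

lemma matrix_add_rdistrib: "(A + B) ** C = A ** C + B ** C"
  by (vector matrix_matrix_mult_def sum.distrib[symmetric] field_simps)

lemma matrix_diff_ldistrib: "(A :: 'a::ring_1^'n^'m) ** (B - C) = A ** B - A ** C"
  by (vector matrix_matrix_mult_def sum_subtractf[symmetric] field_simps)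

lemma matrix_diff_rdistrib: "((A :: 'a::ring_1^'n^'m) - B) ** C = A ** C - B ** C"
  by (vector matrix_matrix_mult_def sum_subtractf[symmetric] field_simps)

lemma matrix_uminus_right: "(A :: 'a::ring_1^'n^'m) ** (- B) = - (A ** B)"
  by (vector matrix_matrix_mult_def sum_negf[symmetric])

lemma matrix_mult_2x2: "((M :: 'a::semiring_1^2^2) ** N) $ i $ j = M$i$1 * N$1$j + M$i$2 * N$2$j"
  by (simp add: matrix_matrix_mult_def sum_2)

lemma trace_2x2: "trace (M :: 'a::comm_ring_1^2^2) = M$1$1 + M$2$2"
  by (simp add: trace_def sum_2)

lemma det_uminus_2x2: "det (- (M :: 'a::comm_ring_1^2^2)) = det M"
  by (simp add: det_2)

lemma det_minus_mat1_2x2: "det ((M :: 'a::comm_ring_1^2^2) - mat 1) = det M - trace M + 1"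
  by (simp add: det_2 trace_2x2 mat_def algebra_simps)

lemma sl2_inv_nth [simp]:
  "sl2_inv M $ 1 $ 1 = M $ 2 $ 2" "sl2_inv M $ 1 $ 2 = - M $ 1 $ 2"
  "sl2_inv M $ 2 $ 1 = - M $ 2 $ 1" "sl2_inv M $ 2 $ 2 = M $ 1 $ 1"
  by (simp_all add: sl2_inv_def)

lemma sl2_inv_mult:
  fixes M :: "'a::comm_ring_1^2^2"
  assumes "det M = 1"
  shows "M ** sl2_inv M = mat 1" "sl2_inv M ** M = mat 1"
  using assms by (auto simp: vec_eq_iff forall_2 matrix_mult_2x2 det_2 mat_def algebra_simps)

lemma det_sl2_inv: "det (sl2_inv (M :: 'a::comm_ring_1^2^2)) = det M"
  by (simp add: det_2 algebra_simps)

definition mat_support_within :: "'a::zero fls^'n^'m \<Rightarrow> int \<Rightarrow> int \<Rightarrow> bool" where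
  "mat_support_within M l h \<longleftrightarrow> (\<forall>i j. fls_support_within (M$i$j) l h)"

definition mat_coeff :: "'a::zero fls^'n^'m \<Rightarrow> int \<Rightarrow> 'a^'n^'m" where
  "mat_coeff M k = (\<chi> i j. M$i$j $$ k)"

lemma mat_coeff_nth [simp]: "mat_coeff M k $ i $ j = M$i$j $$ k"
  by (simp add: mat_coeff_def)

lemma mat_coeff_add [simp]: "mat_coeff (M + N) k = mat_coeff M k + mat_coeff N k"
  and mat_coeff_diff [simp]: "mat_coeff (M - N) k = mat_coeff M k - mat_coeff N k"
  and mat_coeff_uminus [simp]: "mat_coeff (- M) k = - mat_coeff M k"
  and mat_coeff_zero [simp]: "mat_coeff 0 k = 0"
  by (auto simp: vec_eq_iff)

lemma mat_support_within_add:
    "mat_support_within M l h \<Longrightarrow> mat_support_within N l h \<Longrightarrow> mat_support_within (M + N) l h"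
  and mat_support_within_diff:
    "mat_support_within M l h \<Longrightarrow> mat_support_within N l h \<Longrightarrow> mat_support_within (M - N) l h"
  and mat_support_within_uminus: "mat_support_within M l h \<Longrightarrow> mat_support_within (- M) l h"
  and mat_support_within_zero: "mat_support_within 0 l h"
  and mat_support_within_mono:
    "mat_support_within M l h \<Longrightarrow> l' \<le> l \<Longrightarrow> h \<le> h' \<Longrightarrow> mat_support_within M l' h'"
  by (auto simp: mat_support_within_def fls_support_within_def)

lemma mat_support_within_one [simp]: "mat_support_within (mat 1) 0 0"
  and mat_coeff_one [simp]: "mat_coeff (mat 1) 0 = mat 1"
  by (auto simp: mat_support_within_def fls_support_within_def vec_eq_iff mat_def)

lemma mat_coeff_outside: "mat_support_within M l h \<Longrightarrow> k < l \<or> h < k \<Longrightarrow> mat_coeff M k = 0"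
  by (auto simp: mat_support_within_def fls_support_within_def vec_eq_iff)

lemma mat_support_within_mult:
  fixes M N :: "'a::comm_ring_1 fls^2^2"
  assumes M: "mat_support_within M l1 h1" and N: "mat_support_within N l2 h2"
  shows "mat_support_within (M ** N) (l1 + l2) (h1 + h2)"
    and "mat_coeff (M ** N) (l1 + l2) = mat_coeff M l1 ** mat_coeff N l2"
    and "mat_coeff (M ** N) (h1 + h2) = mat_coeff M h1 ** mat_coeff N h2"
proof -
  have entries: "fls_support_within (M$i$k) l1 h1" "fls_support_within (N$k$j) l2 h2" for i j k
    using M N by (auto simp: mat_support_within_def)
  show "mat_support_within (M ** N) (l1 + l2) (h1 + h2)"
    unfolding mat_support_within_def matrix_mult_2x2
    by (intro allI fls_support_within_add fls_support_within_mult(1) entries)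
  show "mat_coeff (M ** N) (l1 + l2) = mat_coeff M l1 ** mat_coeff N l2"
    by (simp add: vec_eq_iff matrix_mult_2x2 fls_support_within_mult(2)[OF entries(1,2)])
  show "mat_coeff (M ** N) (h1 + h2) = mat_coeff M h1 ** mat_coeff N h2"
    by (simp add: vec_eq_iff matrix_mult_2x2 fls_support_within_mult(3)[OF entries(1,2)])
qed

lemma mat_support_within_disjoint_add:
  fixes M N :: "'a::comm_ring_1 fls^'n^'m"
  assumes M: "mat_support_within M l1 h1" and N: "mat_support_within N l2 h2"
    and "l1 \<le> h1" "h1 < l2" "l2 \<le> h2"
  shows "mat_support_within (M + N) l1 h2" "mat_coeff (M + N) l1 = mat_coeff M l1"
    "mat_coeff (M + N) h2 = mat_coeff N h2"
proof -
  show "mat_support_within (M + N) l1 h2"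
    using assms by (intro mat_support_within_add) (auto intro: mat_support_within_mono)
  show "mat_coeff (M + N) l1 = mat_coeff M l1" "mat_coeff (M + N) h2 = mat_coeff N h2"
    using mat_coeff_outside[OF N, of l1] mat_coeff_outside[OF M, of h2] assms by simp_all
qed

lemma mat_support_within_single_eqI:
  assumes "mat_support_within M k k" "mat_support_within N k k" "mat_coeff M k = mat_coeff N k"
  shows "M = N"
proof -
  have "M$i$j $$ n = N$i$j $$ n" for i j n
    using assms by (cases n k rule: linorder_cases)
      (auto simp: mat_support_within_def fls_support_within_def vec_eq_iff)
  then show ?thesis by (simp add: vec_eq_iff fls_eqI)
qed

lemma det_support_within:
  fixes M :: "'a::comm_ring_1 fls^2^2"
  assumes M: "mat_support_within M l h"
  shows "fls_support_within (det M) (l + l) (h + h)"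
    and "det M $$ (l + l) = det (mat_coeff M l)"
    and "det M $$ (h + h) = det (mat_coeff M h)"
proof -
  have entries: "fls_support_within (M$i$j) l h" for i j
    using M by (auto simp: mat_support_within_def)
  show "fls_support_within (det M) (l + l) (h + h)"
    unfolding det_2 by (intro fls_support_within_diff fls_support_within_mult(1) entries)
  show "det M $$ (l + l) = det (mat_coeff M l)" "det M $$ (h + h) = det (mat_coeff M h)"
    by (simp_all only: det_2 fls_minus_nth fls_support_within_mult(2,3)[OF entries entries] mat_coeff_nth)
qed

section \<open>Words, the representation and the map \<open>\<Phi>\<close>\<close>

definition letter_exp :: "letter \<Rightarrow> int" where
  "letter_exp l = (if snd l then -1 else 1)"

definition word_exp :: "word \<Rightarrow> int" where
  "word_exp w = sum_list (map letter_exp w)"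

lemma word_exp_simps [simp]:
  "word_exp [] = 0" "word_exp (l # w) = letter_exp l + word_exp w" "word_exp (u @ v) = word_exp u + word_exp v"
  by (auto simp: word_exp_def)

lemma wpow_0 [simp]: "wpow u 0 = []"
  and wpow_Suc: "wpow u (Suc k) = u @ wpow u k"
  by (auto simp: wpow_def)

lemma word_exp_wpow [simp]: "word_exp (wpow u k) = int k * word_exp u"
  by (induction k) (auto simp: wpow_Suc algebra_simps)

lemma rho_word_simps [simp]:
  "rho_word A B [] = mat 1" "rho_word A B (l # w) = rho_letter A B l ** rho_word A B w"
  by (auto simp: rho_word_def)

lemma Phi_word_simps [simp]:
  "Phi_word A B [] = mat 1" "Phi_word A B (l # w) = Phi_letter A B l ** Phi_word A B w"
  by (auto simp: Phi_word_def)

lemma rho_word_append: "rho_word A B (u @ v) = rho_word A B u ** rho_word A B v"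
  by (induction u) (auto simp: matrix_mul_assoc)

lemma Phi_word_append: "Phi_word A B (u @ v) = Phi_word A B u ** Phi_word A B v"
  by (induction u) (auto simp: matrix_mul_assoc)

lemma det_rho_word: "det A = 1 \<Longrightarrow> det B = 1 \<Longrightarrow> det (rho_word A B w) = 1"
proof (induction w)
  case (Cons l w)
  then show ?case by (auto simp: det_mul rho_letter_def Let_def det_sl2_inv)
qed simp

lemma Phi_letter_homogeneous:
  "mat_support_within (Phi_letter A B l) (letter_exp l) (letter_exp l)"
  "mat_coeff (Phi_letter A B l) (letter_exp l) = rho_letter A B l"
proof -
  let ?t = "if snd l then fls_X_inv else (fls_X :: complex fls)"
  have t: "fls_support_within ?t (letter_exp l) (letter_exp l)" "?t $$ letter_exp l = 1"
    by (auto simp: fls_support_within_def letter_exp_def)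
  have c: "fls_support_within (fls_const c) 0 0" "fls_const c $$ 0 = c" for c :: complex
    by (auto simp: fls_support_within_def)
  show "mat_support_within (Phi_letter A B l) (letter_exp l) (letter_exp l)"
    using fls_support_within_mult(1)[OF t(1) c(1)]
    by (simp add: mat_support_within_def Phi_letter_def lift_mat_def)
  show "mat_coeff (Phi_letter A B l) (letter_exp l) = rho_letter A B l"
    using fls_support_within_mult(2)[OF t(1) c(1)] t(2) c(2)
    by (simp add: vec_eq_iff Phi_letter_def lift_mat_def)
qed

lemma Phi_word_homogeneous:
  "mat_support_within (Phi_word A B w) (word_exp w) (word_exp w) \<and>
   mat_coeff (Phi_word A B w) (word_exp w) = rho_word A B w"
proof (induction w)
  case Nil
  then show ?case using mat_support_within_one mat_coeff_one by simp
next
  case (Cons l w)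
  then show ?case
    using mat_support_within_mult[OF Phi_letter_homogeneous(1) conjunct1[OF Cons]]
      Phi_letter_homogeneous(2)[of A B l] by simp
qed

section \<open>Fox calculus\<close>

fun mat_pow :: "cmat \<Rightarrow> nat \<Rightarrow> cmat" where
  "mat_pow X 0 = mat 1"
| "mat_pow X (Suc k) = X ** mat_pow X k"

fun geom_sum_mat :: "cmat \<Rightarrow> nat \<Rightarrow> cmat" where
  "geom_sum_mat X 0 = 0"
| "geom_sum_mat X (Suc k) = mat 1 + X ** geom_sum_mat X k"

lemma det_mat_pow: "det X = 1 \<Longrightarrow> det (mat_pow X k) = 1"
  by (induction k) (auto simp: det_mul)

lemma Phi_fox_b_append: "Phi_fox_b A B (u @ v) = Phi_fox_b A B u + Phi_word A B u ** Phi_fox_b A B v"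
  by (induction u) (auto simp: matrix_mul_assoc matrix_add_ldistrib add.assoc)

lemma Phi_fox_b_wpow_exp_0:
  assumes "word_exp u = 0" and F: "mat_support_within (Phi_fox_b A B u) l h"
  shows "mat_support_within (Phi_fox_b A B (wpow u k)) l h \<and>
     mat_coeff (Phi_fox_b A B (wpow u k)) l =
       geom_sum_mat (rho_word A B u) k ** mat_coeff (Phi_fox_b A B u) l \<and>
     mat_coeff (Phi_fox_b A B (wpow u k)) h =
       geom_sum_mat (rho_word A B u) k ** mat_coeff (Phi_fox_b A B u) h"
proof (induction k)
  case 0
  then show ?case by (simp add: mat_support_within_zero)
next
  case (Suc k)
  have P: "mat_support_within (Phi_word A B u) 0 0" "mat_coeff (Phi_word A B u) 0 = rho_word A B u"
    using Phi_word_homogeneous[of A B u] assms(1) by auto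
  note M = mat_support_within_mult[OF P(1) conjunct1[OF Suc.IH]]
  show ?case
    using M Suc.IH P F
    by (auto simp: wpow_Suc Phi_fox_b_append matrix_add_rdistrib matrix_mul_assoc
        intro!: mat_support_within_add)
qed

lemma Phi_fox_b_wpow_exp_2:
  assumes "word_exp u = 2" and F: "mat_support_within (Phi_fox_b A B u) 0 1"
  shows "mat_support_within (Phi_fox_b A B (wpow u (Suc k))) 0 (2 * int k + 1) \<and>
     mat_coeff (Phi_fox_b A B (wpow u (Suc k))) (2 * int k + 1) =
       mat_pow (rho_word A B u) k ** mat_coeff (Phi_fox_b A B u) 1"
proof (induction k)
  case 0
  then show ?case using F by (simp add: wpow_Suc)
next
  case (Suc k)
  have P: "mat_support_within (Phi_word A B u) 2 2" "mat_coeff (Phi_word A B u) 2 = rho_word A B u"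
    using Phi_word_homogeneous[of A B u] assms(1) by auto
  note M = mat_support_within_mult[OF P(1) conjunct1[OF Suc.IH]]
  have e: "2 + (2 * int k + 1) = 2 * int (Suc k) + 1" by simp
  note D = mat_support_within_disjoint_add[OF F M(1), unfolded e]
  show ?case
    using D M(3) Suc.IH P
    by (simp add: wpow_Suc[of u "Suc k"] Phi_fox_b_append e matrix_mul_assoc)
qed

definition letter_inv :: "letter \<Rightarrow> letter" where
  "letter_inv l = (fst l, \<not> snd l)"

lemma winv_simps [simp]: "winv [] = []" "winv (l # w) = winv w @ [letter_inv l]"
  by (auto simp: winv_def letter_inv_def split_beta)

lemma word_exp_winv [simp]: "word_exp (winv w) = - word_exp w"
  by (induction w) (auto simp: letter_inv_def letter_exp_def)

lemma rho_letter_inv: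
  assumes "det A = 1" "det B = 1"
  shows "rho_letter A B l ** rho_letter A B (letter_inv l) = mat 1"
    "rho_letter A B (letter_inv l) ** rho_letter A B l = mat 1"
  using assms sl2_inv_mult[of A] sl2_inv_mult[of B]
  by (auto simp: rho_letter_def letter_inv_def Let_def)

lemma rho_word_winv:
  assumes "det A = 1" "det B = 1"
  shows "rho_word A B w ** rho_word A B (winv w) = mat 1"
proof (induction w)
  case (Cons l w)
  have "rho_word A B (l # w) ** rho_word A B (winv (l # w)) =
        rho_letter A B l ** (rho_word A B w ** rho_word A B (winv w)) ** rho_letter A B (letter_inv l)"
    by (simp add: rho_word_append matrix_mul_assoc)
  then show ?case using Cons rho_letter_inv[OF assms] by simp
qed simp

lemma Phi_letter_inv:
  assumes "det A = 1" "det B = 1"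
  shows "Phi_letter A B (letter_inv l) ** Phi_letter A B l = mat 1"
proof -
  have e: "letter_exp (letter_inv l) + letter_exp l = 0"
    by (simp add: letter_exp_def letter_inv_def)
  note M = mat_support_within_mult[OF Phi_letter_homogeneous(1)[of A B "letter_inv l"]
      Phi_letter_homogeneous(1)[of A B l], unfolded e]
  show ?thesis
    by (rule mat_support_within_single_eqI[OF M(1) mat_support_within_one])
      (use M(2) Phi_letter_homogeneous(2) rho_letter_inv[OF assms] mat_coeff_one in auto)
qed

lemma fox_b_letter_inv:
  assumes "det A = 1" "det B = 1"
  shows "fox_b_letter A B (letter_inv l) = - (Phi_letter A B (letter_inv l) ** fox_b_letter A B l)"
  using Phi_letter_inv[OF assms, of l]
  by (cases l) (auto simp: fox_b_letter_def letter_inv_def matrix_uminus_right)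

lemma Phi_fox_b_winv:
  assumes "det A = 1" "det B = 1"
  shows "Phi_fox_b A B (winv w) = - (Phi_word A B (winv w) ** Phi_fox_b A B w)"
proof (induction w)
  case (Cons l w)
  let ?W = "Phi_word A B (winv w)" and ?F = "Phi_fox_b A B w"
  let ?L = "Phi_letter A B l" and ?L' = "Phi_letter A B (letter_inv l)" and ?f = "fox_b_letter A B l"
  have "Phi_fox_b A B (winv (l # w)) = - (?W ** ?F) + ?W ** (- (?L' ** ?f))"
    using Cons fox_b_letter_inv[OF assms, of l] by (simp add: Phi_fox_b_append)
  also have "\<dots> = - (?W ** (?L' ** ?L) ** ?F) - (?W ** ?L') ** ?f"
    using Phi_letter_inv[OF assms, of l] by (simp add: matrix_uminus_right matrix_mul_assoc)
  also have "\<dots> = - ((?W ** ?L') ** (?f + ?L ** ?F))"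
    by (simp add: matrix_add_ldistrib matrix_mul_assoc)
  also have "\<dots> = - (Phi_word A B (winv (l # w)) ** Phi_fox_b A B (l # w))"
    by (simp add: Phi_word_append)
  finally show ?case .
qed simp

lemma det_one_minus_Phi_a_nonzero: "det (mat 1 - Phi_letter A B (GA, False)) \<noteq> 0"
proof -
  have a: "mat_support_within (Phi_letter A B (GA, False)) 1 1"
    using Phi_letter_homogeneous(1)[of A B "(GA, False)"] by (simp add: letter_exp_def)
  have M: "mat_support_within (mat 1 - Phi_letter A B (GA, False)) 0 1"
    using a by (intro mat_support_within_diff mat_support_within_mono[OF mat_support_within_one])
      (auto intro: mat_support_within_mono)
  have "det (mat 1 - Phi_letter A B (GA, False)) $$ (0 + 0) = 1"
    using det_support_within(2)[OF M] mat_coeff_outside[OF a, of 0] mat_coeff_one by simp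
  then show ?thesis by (intro fls_nonzeroI[where n = 0]) simp
qed

text \<open>Fox's fundamental formula for the relator \<open>r = a w a\<^sup>-\<^sup>1 w\<^sup>-\<^sup>1\<close>:
  \<open>\<Phi>(\<partial>r/\<partial>b) = (\<Phi>(a) - 1) \<Phi>(\<partial>w/\<partial>b)\<close>, since \<open>\<Phi>(r) = 1\<close>.\<close>

lemma twisted_alex_eq_det_fox:
  assumes dA: "det A = 1" and dB: "det B = 1"
    and rel: "A ** rho_word A B (Jw m n) ** sl2_inv A = rho_word A B (Jw m n)"
  shows "twisted_alex m n A B = det (Phi_fox_b A B (Jw m n))"
proof -
  let ?w = "Jw m n" and ?a = "Phi_letter A B (GA, False)" and ?a' = "Phi_letter A B (GA, True)"
  let ?F = "Phi_fox_b A B ?w"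
  have "rho_word A B (Jr m n) = (A ** rho_word A B ?w ** sl2_inv A) ** rho_word A B (winv ?w)"
    by (simp add: Jr_def rho_word_append matrix_mul_assoc rho_letter_def)
  then have "rho_word A B (Jr m n) = mat 1"
    using rel rho_word_winv[OF dA dB] by simp
  moreover have "word_exp (Jr m n) = 0" by (simp add: Jr_def letter_exp_def)
  ultimately have Phi_r: "Phi_word A B (Jr m n) = mat 1"
    using Phi_word_homogeneous[of A B "Jr m n"]
    by (intro mat_support_within_single_eqI[OF _ mat_support_within_one]) (auto simp: mat_coeff_one)
  have "Phi_fox_b A B (Jr m n) =
      ?a ** (?F + Phi_word A B ?w ** (?a' ** (- (Phi_word A B (winv ?w) ** ?F))))"
    by (simp add: Jr_def Phi_fox_b_append Phi_fox_b_winv[OF dA dB] fox_b_letter_def)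
  also have "\<dots> = ?a ** ?F - Phi_word A B (Jr m n) ** ?F"
    by (simp add: Jr_def Phi_word_append matrix_add_ldistrib matrix_diff_ldistrib
        matrix_uminus_right matrix_mul_assoc)
  also have "\<dots> = (?a - mat 1) ** ?F"
    using Phi_r by (simp add: matrix_diff_rdistrib)
  finally have "Phi_fox_b A B (Jr m n) = (?a - mat 1) ** ?F" .
  moreover have "det (?a - mat 1) = det (mat 1 - ?a)" by (simp add: det_2 algebra_simps)
  ultimately show ?thesis
    using det_one_minus_Phi_a_nonzero[of A B] by (simp add: twisted_alex_def det_mul)
qed

section \<open>The Fox derivative of the double twist relator\<close>

abbreviation "binv_a \<equiv> [(GB, True), (GA, False)]"
abbreviation "b_ainv \<equiv> [(GB, False), (GA, True)]"
abbreviation "b_a \<equiv> [(GB, False), (GA, False)]"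
abbreviation "twist_block m \<equiv> wpow b_ainv m @ b_a @ wpow binv_a m"

lemma Phi_fox_b_pow_binv_a:
  "mat_support_within (Phi_fox_b A B (wpow binv_a m)) (-1) (-1)"
  "mat_coeff (Phi_fox_b A B (wpow binv_a m)) (-1) =
     geom_sum_mat (rho_word A B binv_a) m ** (- sl2_inv B)"
proof -
  have "Phi_fox_b A B binv_a = - Phi_letter A B (GB, True)"
    by (simp add: fox_b_letter_def)
  then have "mat_support_within (Phi_fox_b A B binv_a) (-1) (-1)"
    "mat_coeff (Phi_fox_b A B binv_a) (-1) = - sl2_inv B"
    using Phi_letter_homogeneous[of A B "(GB, True)"]
    by (auto intro: mat_support_within_uminus simp: letter_exp_def rho_letter_def)
  then show "mat_support_within (Phi_fox_b A B (wpow binv_a m)) (-1) (-1)"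
    "mat_coeff (Phi_fox_b A B (wpow binv_a m)) (-1) =
       geom_sum_mat (rho_word A B binv_a) m ** (- sl2_inv B)"
    using Phi_fox_b_wpow_exp_0[of binv_a A B "-1" "-1" m] by (auto simp: letter_exp_def)
qed

lemma Phi_fox_b_twist_block:
  "mat_support_within (Phi_fox_b A B (twist_block m)) 0 1"
  "mat_coeff (Phi_fox_b A B (twist_block m)) 1 =
      rho_word A B (wpow b_ainv m @ b_a) ** geom_sum_mat (rho_word A B binv_a) m ** (- sl2_inv B)"
proof -
  let ?G = "geom_sum_mat (rho_word A B binv_a) m"
  have Phi_ba: "mat_support_within (Phi_word A B b_a) 2 2" "mat_coeff (Phi_word A B b_a) 2 = rho_word A B b_a"
    using Phi_word_homogeneous[of A B b_a] by (auto simp: letter_exp_def)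
  note tail = mat_support_within_mult[OF Phi_ba(1) Phi_fox_b_pow_binv_a(1)]
  have fox_ba: "Phi_fox_b A B b_a = mat 1"
    by (simp add: fox_b_letter_def)
  have "mat_support_within (Phi_word A B b_a ** Phi_fox_b A B (wpow binv_a m)) 1 1"
    using tail(1) by simp
  note tail' = mat_support_within_disjoint_add[OF mat_support_within_one this order_refl zero_less_one order_refl]
  have fox_tail: "mat_support_within (Phi_fox_b A B (b_a @ wpow binv_a m)) 0 1"
    "mat_coeff (Phi_fox_b A B (b_a @ wpow binv_a m)) 1 = rho_word A B b_a ** ?G ** (- sl2_inv B)"
    using tail' tail(3) Phi_ba(2) Phi_fox_b_pow_binv_a(2)
    unfolding Phi_fox_b_append[of A B b_a] fox_ba by (simp_all add: matrix_mul_assoc)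
  have Phi_q: "mat_support_within (Phi_word A B (wpow b_ainv m)) 0 0"
    "mat_coeff (Phi_word A B (wpow b_ainv m)) 0 = rho_word A B (wpow b_ainv m)"
    using Phi_word_homogeneous[of A B "wpow b_ainv m"] by (auto simp: letter_exp_def)
  have fox_q: "mat_support_within (Phi_fox_b A B (wpow b_ainv m)) 0 0"
    using Phi_fox_b_wpow_exp_0[of b_ainv A B 0 0 m]
    by (simp add: letter_exp_def fox_b_letter_def)
  note head = mat_support_within_mult[OF Phi_q(1) fox_tail(1)]
  have "mat_support_within (Phi_fox_b A B (wpow b_ainv m)) 0 1"
    using fox_q by (rule mat_support_within_mono) simp_all
  from mat_support_within_add[OF this head(1)[unfolded add_0]]
  show "mat_support_within (Phi_fox_b A B (twist_block m)) 0 1"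
    by (simp only: Phi_fox_b_append[of A B "wpow b_ainv m"])
  show "mat_coeff (Phi_fox_b A B (twist_block m)) 1 =
      rho_word A B (wpow b_ainv m @ b_a) ** ?G ** (- sl2_inv B)"
    using head(3) Phi_q(2) fox_tail(2) mat_coeff_outside[OF fox_q, of 1]
    unfolding Phi_fox_b_append[of A B "wpow b_ainv m"]
    by (simp add: rho_word_append matrix_mul_assoc)
qed

lemma Phi_fox_b_Jw:
  fixes m k :: nat
  assumes dA: "det A = 1" and dB: "det B = 1"
  defines "G \<equiv> geom_sum_mat (rho_word A B binv_a) m"
  shows "mat_support_within (Phi_fox_b A B (Jw m (Suc k))) (-1) (2 * int k + 1)"
    and "det (mat_coeff (Phi_fox_b A B (Jw m (Suc k))) (-1)) = det G"
    and "det (mat_coeff (Phi_fox_b A B (Jw m (Suc k))) (2 * int k + 1)) = det G"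
proof -
  have Jw: "Jw m (Suc k) = wpow binv_a m @ wpow (twist_block m) (Suc k)"
    by (simp add: Jw_def)
  have Phi_p: "mat_support_within (Phi_word A B (wpow binv_a m)) 0 0"
    "mat_coeff (Phi_word A B (wpow binv_a m)) 0 = rho_word A B (wpow binv_a m)"
    using Phi_word_homogeneous[of A B "wpow binv_a m"] by (auto simp: letter_exp_def)
  have exp_block: "word_exp (twist_block m) = 2" by (simp add: letter_exp_def)
  note blocks = Phi_fox_b_wpow_exp_2[OF exp_block Phi_fox_b_twist_block(1), of A B k]
  note tail = mat_support_within_mult[OF Phi_p(1) conjunct1[OF blocks]]
  note sum = mat_support_within_disjoint_add[OF Phi_fox_b_pow_binv_a(1) tail(1)[unfolded add_0]]
  show "mat_support_within (Phi_fox_b A B (Jw m (Suc k))) (-1) (2 * int k + 1)"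
    using sum(1) by (simp add: Jw Phi_fox_b_append[of A B "wpow binv_a m"])
  have "mat_coeff (Phi_fox_b A B (Jw m (Suc k))) (-1) = G ** (- sl2_inv B)"
    using sum(2) Phi_fox_b_pow_binv_a(2) by (simp add: G_def Jw Phi_fox_b_append[of A B "wpow binv_a m"])
  then show "det (mat_coeff (Phi_fox_b A B (Jw m (Suc k))) (-1)) = det G"
    using dB by (simp add: det_mul det_uminus_2x2 det_sl2_inv)
  have "mat_coeff (Phi_fox_b A B (Jw m (Suc k))) (2 * int k + 1) =
      rho_word A B (wpow binv_a m) ** mat_pow (rho_word A B (twist_block m)) k **
      rho_word A B (wpow b_ainv m @ b_a) ** G ** (- sl2_inv B)"
    using sum(3) tail(3) Phi_p(2) blocks Phi_fox_b_twist_block(2)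
    by (simp add: G_def Jw Phi_fox_b_append[of A B "wpow binv_a m"] matrix_mul_assoc)
  then show "det (mat_coeff (Phi_fox_b A B (Jw m (Suc k))) (2 * int k + 1)) = det G"
    using dA dB by (simp add: det_mul det_uminus_2x2 det_sl2_inv det_mat_pow det_rho_word del: rho_word_simps)
qed

lemma twisted_alex_degree:
  assumes "det A = 1" "det B = 1" "n \<ge> 1"
    and "A ** rho_word A B (Jw m n) ** sl2_inv A = rho_word A B (Jw m n)"
    and "det (geom_sum_mat (rho_word A B binv_a) m) \<noteq> 0"
  shows "twisted_alex m n A B \<noteq> 0 \<and> is_laurent_poly (twisted_alex m n A B) \<and>
         laurent_deg (twisted_alex m n A B) = 4 * int n"
proof -
  obtain k where n: "n = Suc k" using assms(3) by (cases n) auto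
  note fox = Phi_fox_b_Jw[OF assms(1,2), of m k]
  note det_fox = det_support_within[OF fox(1)]
  have "fls_support_within (det (Phi_fox_b A B (Jw m n))) (-2) (4 * int k + 2)"
    "det (Phi_fox_b A B (Jw m n)) $$ (-2) \<noteq> 0" "det (Phi_fox_b A B (Jw m n)) $$ (4 * int k + 2) \<noteq> 0"
    using det_fox fox(2,3) assms(5) by (simp_all add: n)
  from laurent_deg_support_within[OF this] show ?thesis
    using twisted_alex_eq_det_fox[OF assms(1,2,4)] n by simp
qed

section \<open>Geometric sums of matrices in \<open>SL(2, \<complex>)\<close>\<close>

lemma cayley_hamilton_2x2: "(X :: 'a::comm_ring_1^2^2) ** X = mat (trace X) ** X - mat (det X)"
  by (simp add: vec_eq_iff forall_2 matrix_mult_2x2 det_2 trace_2x2 mat_def algebra_simps)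

lemma geom_sum_mat_telescope: "(X - mat 1) ** geom_sum_mat X k = mat_pow X k - mat 1"
proof (induction k)
  case (Suc k)
  have "(X - mat 1) ** geom_sum_mat X (Suc k) = (X - mat 1) + ((X - mat 1) ** X) ** geom_sum_mat X k"
    by (simp add: matrix_add_ldistrib matrix_mul_assoc)
  also have "(X - mat 1) ** X = X ** (X - mat 1)"
    by (simp add: matrix_diff_ldistrib matrix_diff_rdistrib)
  also have "(X - mat 1) + (X ** (X - mat 1)) ** geom_sum_mat X k = X - mat 1 + X ** (mat_pow X k - mat 1)"
    using Suc by (simp add: matrix_mul_assoc[symmetric])
  also have "\<dots> = mat_pow X (Suc k) - mat 1"
    by (simp add: matrix_diff_ldistrib)
  finally show ?case .
qed simp

lemma trace_mat_scalar_mult_2x2: "trace (mat c ** (M :: 'a::comm_ring_1^2^2)) = c * trace M"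
  by (simp add: trace_2x2 matrix_mult_2x2 mat_def algebra_simps)

lemma trace_mat_pow:
  assumes "det X = 1" "l \<noteq> 0" "trace X = l + 1/l"
  shows "trace (mat_pow X k) = l^k + (1/l)^k"
proof -
  have step: "trace (mat_pow X (Suc (Suc k))) = trace X * trace (mat_pow X (Suc k)) - trace (mat_pow X k)" for k
  proof -
    have "mat_pow X (Suc (Suc k)) = mat (trace X) ** (X ** mat_pow X k) - mat_pow X k"
      using cayley_hamilton_2x2[of X] assms(1) by (simp add: matrix_mul_assoc matrix_diff_rdistrib)
    then show ?thesis
      by (simp only: trace_sub trace_mat_scalar_mult_2x2 mat_pow.simps)
  qed
  have "trace (mat_pow X k) = l^k + (1/l)^k \<and> trace (mat_pow X (Suc k)) = l^(Suc k) + (1/l)^(Suc k)"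
  proof (induction k)
    case 0
    then show ?case using assms(3) by (simp add: trace_I)
  next
    case (Suc k)
    have "trace (mat_pow X (Suc (Suc k))) = (l + 1/l) * (l^(Suc k) + (1/l)^(Suc k)) - (l^k + (1/l)^k)"
      using step[of k] Suc assms(3) by simp
    also have "\<dots> = l^(Suc (Suc k)) + (1/l)^(Suc (Suc k))"
      using assms(2) by (simp add: field_simps power_Suc)
    finally show ?case using Suc by simp
  qed
  then show ?thesis ..
qed

lemma det_geom_sum_mat_unipotent:
  assumes "det X = 1" "trace X = 2"
  shows "det (geom_sum_mat X k) = of_nat k * of_nat k"
proof -
  define N where "N = X - mat 1"
  have trace_N: "trace N = 0"
    using assms by (simp add: N_def trace_sub trace_I)
  have det_N: "det N = 0"
    using assms unfolding N_def det_minus_mat1_2x2 by simp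
  have nilpotent: "N ** N = 0"
    using cayley_hamilton_2x2[of N] trace_N det_N by simp
  have step: "mat 1 + (mat 1 + N) ** (mat k + mat c ** N) =
      mat (1 + k) + mat (k + c) ** N + mat c ** (N ** N)" for k c :: complex
    by (simp add: vec_eq_iff forall_2 matrix_mult_2x2 mat_def algebra_simps)
  have "\<exists>c. geom_sum_mat X k = mat (of_nat k) + mat c ** N"
  proof (induction k)
    case (Suc k)
    then obtain c where "geom_sum_mat X k = mat (of_nat k) + mat c ** N" ..
    then have "geom_sum_mat X (Suc k) = mat (of_nat (Suc k)) + mat (of_nat k + c) ** N"
      using step[of "of_nat k" c] nilpotent by (simp add: N_def add.commute)
    then show ?case ..
  qed (auto intro: exI[of _ 0])
  then obtain c where G: "geom_sum_mat X k = mat (of_nat k) + mat c ** N" ..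
  have "det (mat a + mat c ** N) = a * a + a * c * trace N + c * c * det N" for a
    by (simp add: det_2 trace_2x2 matrix_mult_2x2 mat_def algebra_simps)
  then show ?thesis using G trace_N det_N by simp
qed

lemma ex_plus_inverse: "\<exists>l::complex. l \<noteq> 0 \<and> z = l + 1/l"
proof -
  define s where "s = csqrt (z^2 - 4)"
  define l where "l = (z + s) / 2"
  have s2: "s^2 = z^2 - 4" by (simp add: s_def)
  have l0: "l \<noteq> 0"
  proof
    assume "l = 0"
    then have "s^2 = z^2" by (simp add: l_def add_eq_0_iff)
    then show False using s2 by simp
  qed
  have "l * l - z * l + 1 = (s^2 - (z^2 - 4)) / 4"
    by (simp add: l_def field_simps power2_eq_square)
  then have "z * l = l * l + 1" using s2 by (simp add: algebra_simps)
  then have "z = l + 1/l" using l0 by (simp add: field_simps)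
  then show ?thesis using l0 by blast
qed

lemma det_geom_sum_mat_eq_0_imp_root:
  assumes "det X = 1" "m \<ge> 1" "det (geom_sum_mat X m) = 0"
  shows "\<exists>l. l \<noteq> 0 \<and> trace X = l + 1/l \<and> l^m = 1 \<and> l \<noteq> 1"
proof -
  obtain l where l: "l \<noteq> 0" "trace X = l + 1/l" using ex_plus_inverse by blast
  have "det ((X - mat 1) ** geom_sum_mat X m) = 0" using assms(3) by (simp add: det_mul)
  then have "trace (mat_pow X m) = 2"
    using det_mat_pow[OF assms(1)] by (simp add: geom_sum_mat_telescope det_minus_mat1_2x2)
  then have "l^m + 1 / l^m = 2"
    using trace_mat_pow[OF assms(1) l] by (simp add: power_one_over)
  then have "(l^m - 1)^2 = 0"
    using l(1) by (simp add: field_simps power2_eq_square)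
  then have "l^m = 1" by simp
  moreover have "l \<noteq> 1"
  proof
    assume "l = 1"
    then have "det (geom_sum_mat X m) = of_nat m * of_nat m"
      using det_geom_sum_mat_unipotent[OF assms(1)] l(2) by simp
    then show False using assms(2,3) by simp
  qed
  ultimately show ?thesis using l by blast
qed

section \<open>Chebyshev polynomials at \<open>\<lambda> + \<lambda>\<inverse>\<close>\<close>

lemma cheb_plus_inverse:
  fixes l l' :: complex
  assumes inv: "l * l' = 1"
  shows "cheb k (l + l') * (l - l') = l^(Suc k) - l'^(Suc k)"
proof -
  have shift: "l * l'^(Suc i) = l'^i" "l' * l^(Suc i) = l^i" for i
    using inv by (simp_all add: mult.assoc[symmetric] mult.commute)
  have "cheb k (l + l') * (l - l') = l^(Suc k) - l'^(Suc k) \<and>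
      cheb (Suc k) (l + l') * (l - l') = l^(Suc (Suc k)) - l'^(Suc (Suc k))"
  proof (induction k)
    case 0
    then show ?case by (simp add: algebra_simps power2_eq_square)
  next
    case (Suc k)
    have "cheb (Suc (Suc k)) (l + l') * (l - l') =
        (l + l') * (cheb (Suc k) (l + l') * (l - l')) - cheb k (l + l') * (l - l')"
      by (simp add: algebra_simps)
    also have "\<dots> = (l + l') * (l^(Suc (Suc k)) - l'^(Suc (Suc k))) - (l^(Suc k) - l'^(Suc k))"
      using Suc by simp
    also have "(l + l') * (l^(Suc (Suc k)) - l'^(Suc (Suc k))) =
        l * l^(Suc (Suc k)) - l * l'^(Suc (Suc k)) + l' * l^(Suc (Suc k)) - l' * l'^(Suc (Suc k))"
      by (simp add: algebra_simps)
    also have "\<dots> = l^(Suc (Suc (Suc k))) - l'^(Suc k) + l^(Suc k) - l'^(Suc (Suc (Suc k)))"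
      by (simp only: shift power_Suc[symmetric])
    finally show ?case using Suc by simp
  qed
  then show ?thesis ..
qed

lemma cheb_two: "cheb k 2 = of_nat k + 1"
proof -
  have "cheb k 2 = of_nat k + 1 \<and> cheb (Suc k) 2 = of_nat (Suc k) + 1"
    by (induction k) (auto simp: algebra_simps)
  then show ?thesis ..
qed

lemma cheb_minus_two: "cheb k (-2) = (-1)^k * (of_nat k + 1)"
proof -
  have "cheb k (-2) = (-1)^k * (of_nat k + 1) \<and> cheb (Suc k) (-2) = (-1)^(Suc k) * (of_nat (Suc k) + 1)"
  proof (induction k)
    case (Suc k)
    then have "cheb (Suc (Suc k)) (-2) = (-2) * ((-1)^(Suc k) * (of_nat (Suc k) + 1)) - (-1)^k * (of_nat k + 1)"
      by simp
    also have "\<dots> = (-1)^(Suc (Suc k)) * (of_nat (Suc (Suc k)) + 1)"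
      by (simp add: algebra_simps)
    finally show ?case using Suc by simp
  qed simp
  then show ?thesis ..
qed

lemma root_of_unity_plus_inverse:
  assumes "(l::complex)^N = 1" "N \<ge> 1" "l \<noteq> 1" "l \<noteq> -1"
  shows "\<exists>j. 1 \<le> j \<and> 2 * j < N \<and>
    l + 1/l = complex_of_real (2 * cos (2 * real j * pi / real N))"
proof -
  have cis_plus_inverse: "cis t + 1 / cis t = complex_of_real (2 * cos t)" for t
    by (simp add: complex_eq_iff divide_inverse)
  obtain j0 where j0: "j0 < N" "l = exp (2 * of_real pi * \<i> * of_nat j0 / of_nat N)"
    using assms complex_roots_unity[OF assms(2)] by blast
  then have l: "l = cis (2 * real j0 * pi / real N)"
    by (simp add: cis_conv_exp field_simps)
  have "j0 \<noteq> 0"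
  proof
    assume "j0 = 0"
    then show False using l assms(3) by simp
  qed
  have "2 * j0 \<noteq> N"
  proof
    assume "2 * j0 = N"
    then have "real N = 2 * real j0" by simp
    then have "2 * real j0 * pi / real N = pi" using \<open>j0 \<noteq> 0\<close> by simp
    then show False using l assms(4) by simp
  qed
  show ?thesis
  proof (cases "2 * j0 < N")
    case True
    then show ?thesis using \<open>j0 \<noteq> 0\<close> l cis_plus_inverse by (intro exI[of _ j0]) auto
  next
    case False
    have "2 * real (N - j0) * pi / real N = 2 * pi - 2 * real j0 * pi / real N"
      using j0(1) assms(2) by (simp add: of_nat_diff field_simps)
    then have "cos (2 * real (N - j0) * pi / real N) = cos (2 * real j0 * pi / real N)"
      by simp
    then have "l + 1/l = complex_of_real (2 * cos (2 * real (N - j0) * pi / real N))"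
      by (simp only: l cis_plus_inverse)
    then show ?thesis
      using j0(1) False \<open>2 * j0 \<noteq> N\<close> by (intro exI[of _ "N - j0"]) auto
  qed
qed

lemma cheb_eq_0_imp_cos:
  assumes "cheb (n - 1) w = 0" "n \<ge> 1"
  shows "\<exists>k. 1 \<le> k \<and> k \<le> n - 1 \<and> w = complex_of_real (2 * cos (real k * pi / real n))"
proof -
  obtain u where u: "u \<noteq> 0" "w = u + 1/u" using ex_plus_inverse by blast
  have n: "Suc (n - 1) = n" "of_nat (n - 1) + 1 = (of_nat n :: complex)"
    using assms(2) by (simp_all add: of_nat_diff)
  have "u \<noteq> 1"
    using assms cheb_two[of "n - 1"] n u by auto
  moreover have "u \<noteq> -1"
    using assms cheb_minus_two[of "n - 1"] n u by auto
  moreover have "u^(2 * n) = 1"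
  proof -
    have "u^n = (1/u)^n"
      using cheb_plus_inverse[of u "1/u" "n - 1"] u assms(1) n(1) by simp
    then have "u^n * u^n = u^n * (1/u)^n" by simp
    then show ?thesis using u(1) by (simp add: power_mult_distrib[symmetric] mult_2 power_add)
  qed
  ultimately obtain j where j: "1 \<le> j" "2 * j < 2 * n"
      "u + 1/u = complex_of_real (2 * cos (2 * real j * pi / real (2 * n)))"
    using root_of_unity_plus_inverse[of u "2 * n"] assms(2) by auto
  have "2 * real j * pi / real (2 * n) = real j * pi / real n" by simp
  then show ?thesis using j u(2) by (intro exI[of _ j]) auto
qed

section \<open>Points of the character variety\<close>

lemma Rpoly_minus_two_imp_Yexc:
  assumes "Rpoly m n x y (-2) = 0" "even m" "m \<ge> 1"
  shows "(x, y, -2) \<in> Yexc m n"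
proof -
  have "odd (m - 1)" "of_nat (m - 1) + 1 = (of_nat m :: complex)"
    using assms(2,3) by (auto simp: of_nat_diff)
  then have cheb_m: "cheb (m - 1) (-2) = - of_nat m" "cheb m (-2) = of_nat m + 1"
    using assms(2) by (simp_all add: cheb_minus_two)
  define v1 where "v1 = x * y + 2 + of_nat (m^2 + m) * (x + y)^2"
  have "(x * cheb m (-2) - y * cheb (m - 1) (-2)) * (y * cheb m (-2) - x * cheb (m - 1) (-2))
      - (-2) * ((cheb m (-2))^2 + (cheb (m - 1) (-2))^2) + 4 * cheb m (-2) * cheb (m - 1) (-2) = v1"
    by (simp only: cheb_m) (simp add: v1_def algebra_simps power2_eq_square)
  then have "cheb (m - 1) (-2) * cheb n v1 - cheb m (-2) * cheb (n - 1) v1 = 0"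
    using assms(1) by (simp only: Rpoly_def Let_def)
  moreover have "of_nat m * cheb n v1 + of_nat (m + 1) * cheb (n - 1) v1 =
      - (cheb (m - 1) (-2) * cheb n v1 - cheb m (-2) * cheb (n - 1) v1)"
    by (simp only: cheb_m) (simp add: algebra_simps)
  ultimately have "of_nat m * cheb n v1 + of_nat (m + 1) * cheb (n - 1) v1 = 0"
    by simp
  then show ?thesis by (simp add: Yexc_def v1_def)
qed

lemma Rpoly_root_of_unity_imp_Yjk:
  assumes "Rpoly m n x y (l + 1/l) = 0" "l^m = 1" "l \<noteq> 1" "l \<noteq> -1" "m \<ge> 1" "n \<ge> 1"
  shows "\<exists>j k. 1 \<le> j \<and> 2 * j < m \<and> 1 \<le> k \<and> k \<le> n - 1 \<and>
    (x, y, l + 1/l) \<in> Yjk m n j k"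
proof -
  have "l \<noteq> 0" using assms(2,5) by (cases "l = 0") (auto simp: power_0_left)
  have "l - 1/l \<noteq> 0"
  proof
    assume "l - 1/l = 0"
    then have "(l - 1) * (l + 1) = 0" using \<open>l \<noteq> 0\<close> by (simp add: field_simps)
    then show False using assms(3,4) by (auto simp: add_eq_0_iff minus_equation_iff)
  qed
  have "(1/l)^m = 1" using assms(2) by (simp add: power_one_over)
  then have "cheb (m - 1) (l + 1/l) = 0" "cheb m (l + 1/l) = 1"
    using cheb_plus_inverse[of l "1/l" "m - 1"] cheb_plus_inverse[of l "1/l" m] \<open>l \<noteq> 0\<close>
      \<open>l - 1/l \<noteq> 0\<close> assms(2,5) by simp_all
  then have "cheb (n - 1) (x * y - (l + 1/l)) = 0"
    using assms(1) by (simp add: Rpoly_def Let_def)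
  then obtain k where k: "1 \<le> k" "k \<le> n - 1"
      "x * y - (l + 1/l) = complex_of_real (2 * cos (real k * pi / real n))"
    using cheb_eq_0_imp_cos assms(6) by blast
  obtain j where j: "1 \<le> j" "2 * j < m" "l + 1/l = complex_of_real (2 * cos (2 * real j * pi / real m))"
    using root_of_unity_plus_inverse[OF assms(2,5,3,4)] by blast
  show ?thesis using j k by (auto simp: Yjk_def)
qed

theorem proposition4p7:
  fixes m n :: nat and A B :: "complex^2^2"
  assumes "m \<ge> 1" and "n \<ge> 1"
    and "det A = 1" and "det B = 1"
    and "A ** rho_word A B (Jw m n) ** sl2_inv A = rho_word A B (Jw m n)"
    and "A ** B \<noteq> B ** A"
    and "Rpoly m n (trace A) (trace B) (trace (A ** sl2_inv B)) = 0"
    and "\<forall>j k. 1 \<le> j \<and> 2 * j < m \<and> 1 \<le> k \<and> k \<le> n - 1 \<longrightarrow>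
           (trace A, trace B, trace (A ** sl2_inv B)) \<notin> Yjk m n j k"
    and "even m \<longrightarrow> (trace A, trace B, trace (A ** sl2_inv B)) \<notin> Yexc m n"
  shows "twisted_alex m n A B \<noteq> 0 \<and> is_laurent_poly (twisted_alex m n A B) \<and>
         laurent_deg (twisted_alex m n A B) = 4 * int n"
proof (rule twisted_alex_degree[OF assms(3,4,2,5)], rule notI)
  let ?X = "rho_word A B binv_a"
  have det_X: "det ?X = 1" using det_rho_word[OF assms(3,4)] .
  have trace_X: "trace ?X = trace (A ** sl2_inv B)"
    by (simp add: rho_letter_def trace_2x2 matrix_mult_2x2 algebra_simps)
  assume "det (geom_sum_mat ?X m) = 0"
  then obtain l where l: "l \<noteq> 0" "trace ?X = l + 1/l" "l^m = 1" "l \<noteq> 1"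
    using det_geom_sum_mat_eq_0_imp_root[OF det_X assms(1)] by blast
  show False
  proof (cases "l = -1")
    case True
    then have "even m" using l(3) by (cases "even m") auto
    then show False
      using Rpoly_minus_two_imp_Yexc[of m n] assms(1,7,9) l(2) trace_X True by auto
  next
    case False
    then show False
      using Rpoly_root_of_unity_imp_Yjk[of m n _ _ l] assms(1,2,7,8) l trace_X by metis
  qed
qed

end
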